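(* Let $\alpha$ be a unit-speed curve in $\mathbb{R}^3$ with arc length $s$, nonvanishing curvature $\kappa$ and torsion $\tau$. Let $\alpha_T$ be its tangent indicatrix, with arc length $s_T=\int\kappa\,ds$, and let $\beta$ be a Mannheim-direction curve of $\alpha_T$ (an $X$-direction curve of $\alpha_T$ with $N_\beta=B_T$). Then there is a function $\psi(s)$ with $\frac{d\psi}{ds}=\sqrt{\kappa^2+\tau^2}$ such that, at corresponding parameter values, $$\frac{\tau_\beta}{\kappa_\beta}=\tan\psi.$$ Moreover, $$\frac{\kappa_\beta^2}{(\kappa_\beta^2+\tau_\beta^2)^{3/2}}\,\frac{d}{ds_T}\Big(\frac{\tau_\beta}{\kappa_\beta}\Big)=\mp\,\frac{1}{\dfrac{\kappa^2}{(\kappa^2+\tau^2)^{3/2}}\Big(\dfrac{\tau}{\kappa}\Big)'},$$ that is, the two sides agree up to sign. Here $'=d/ds$.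
   Context: Let $\alpha:I\subset\mathbb{R}\to\mathbb{R}^3$ be a unit-speed curve with arc length $s$, curvature $\kappa>0$, torsion $\tau$ and Frenet frame $\{T,N,B\}$. Put $f=\tau/\kappa$ and $\sigma=\frac{\kappa^2}{(\kappa^2+\tau^2)^{3/2}}(\tau/\kappa)'$. The tangent indicatrix of $\alpha$ is the curve $\alpha_T=T$ on the unit sphere. Its arc length is $s_T=\int\kappa\,ds$, so parameters $s$ and $s_T(s)$ correspond. Its Frenet apparatus is $\{T_T,N_T,B_T,\kappa_T,\tau_T\}$, with $\frac{dT_T}{ds_T}=\kappa_TN_T$, $\frac{dN_T}{ds_T}=-\kappa_TT_T+\tau_TB_T$ and $\frac{dB_T}{ds_T}=-\tau_TN_T$. It is known that $\kappa_T=\sqrt{1+f^2}$ and $\tau_T=\sigma\sqrt{1+f^2}$. Let $x,y,z$ be real functions of $s_T$ with $x^2+y^2+z^2=1$, and set $X=xT_T+yN_T+zB_T$. An integral curve $\beta$ of $X$, meaning $d\beta/ds_T=X$, is an $X$-direction curve of $\alpha_T$. It is regarded as a unit-speed Frenet curve with frame $\{T_\beta=X,N_\beta,B_\beta\}$, curvature $\kappa_\beta>0$ and torsion $\tau_\beta$. $\beta$ is a Mannheim-direction curve of $\alpha_T$ if $N_\beta=B_T$. *)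

theory Defs
  imports "HOL-Analysis.Analysis"
begin

definition ratio_fn :: "(real \<Rightarrow> real) \<Rightarrow> (real \<Rightarrow> real) \<Rightarrow> real \<Rightarrow> real" where
  "ratio_fn kap tau s = tau s / kap s"

definition frenet_sigma :: "(real \<Rightarrow> real) \<Rightarrow> (real \<Rightarrow> real) \<Rightarrow> real \<Rightarrow> real" where
  "frenet_sigma kap tau s =
     kap s ^ 2 / (kap s ^ 2 + tau s ^ 2) powr (3/2) * deriv (ratio_fn kap tau) s"

definition frenet_curve ::
  "real set \<Rightarrow> (real \<Rightarrow> real^3) \<Rightarrow> (real \<Rightarrow> real^3) \<Rightarrow> (real \<Rightarrow> real^3) \<Rightarrow> (real \<Rightarrow> real^3)
   \<Rightarrow> (real \<Rightarrow> real) \<Rightarrow> (real \<Rightarrow> real) \<Rightarrow> bool" where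
  "frenet_curve U c Tc Nc Bc k t \<longleftrightarrow>
     (\<forall>u\<in>U.
        (c has_vector_derivative Tc u) (at u) \<and>
        norm (Tc u) = 1 \<and> norm (Nc u) = 1 \<and> Tc u \<bullet> Nc u = 0 \<and>
        Bc u = cross3 (Tc u) (Nc u) \<and>
        k u > 0 \<and>
        (Tc has_vector_derivative (k u *\<^sub>R Nc u)) (at u) \<and>
        (Nc has_vector_derivative (- (k u *\<^sub>R Tc u) + t u *\<^sub>R Bc u)) (at u) \<and>
        (Bc has_vector_derivative (- (t u *\<^sub>R Nc u))) (at u))"

end

theory Submission
  imports Defs
begin

(* Since N_beta = B_T, the tangent X of beta is orthogonal to B_T, so X = x T_T + y N_T with
   x^2 + y^2 = 1. Differentiating X . B_T, and the identity N_beta = B_T, with the Frenet equations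
   of both curves gives kappa_beta = tau_T y and tau_beta / kappa_beta = x / y, while the quotient
   rule gives (x / y)' = kappa_T / y^2. Hence psi = arctan (tau_beta / kappa_beta) has
   d psi / d s_T = kappa_T, i.e. d psi / d s = kappa kappa_T = sqrt (kappa^2 + tau^2), and the
   harmonic curvature of beta is |y| kappa_T / kappa_beta = sgn y kappa_T / tau_T = sgn y / sigma.
   Both differentiations take place on the open set s_T(I), which is open by invariance of
   domain because s_T is strictly increasing. *)

lemma has_real_derivative_inner:
  fixes f g :: "real \<Rightarrow> 'a::real_inner"
  assumes "(f has_vector_derivative f') (at u)" "(g has_vector_derivative g') (at u)"
  shows "((\<lambda>v. f v \<bullet> g v) has_real_derivative f' \<bullet> g u + f u \<bullet> g') (at u)"
proof -
  have "((\<lambda>v. f v \<bullet> g v) has_derivative (\<lambda>h. f u \<bullet> (h *\<^sub>R g') + (h *\<^sub>R f') \<bullet> g u)) (at u)"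
    using has_derivative_inner[OF assms[unfolded has_vector_derivative_def]] .
  moreover have "(\<lambda>h. f u \<bullet> (h *\<^sub>R g') + (h *\<^sub>R f') \<bullet> g u) = (*) (f' \<bullet> g u + f u \<bullet> g')"
    by (auto simp: fun_eq_iff algebra_simps inner_commute)
  ultimately show ?thesis
    unfolding has_field_derivative_def by simp
qed

lemma cross3_cross3_right: "cross3 (a::real^3) (cross3 b c) = (a \<bullet> c) *\<^sub>R b - (a \<bullet> b) *\<^sub>R c"
  unfolding vec_eq_iff forall_3 inner_vec_def sum_3
  by (simp add: cross_components algebra_simps)

lemma strict_mono_on_pos_deriv:
  fixes f f' :: "real \<Rightarrow> real"
  assumes "is_interval S"
    and "\<And>x. x \<in> S \<Longrightarrow> (f has_real_derivative f' x) (at x)" "\<And>x. x \<in> S \<Longrightarrow> f' x > 0"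
  shows "strict_mono_on S f"
proof (rule strict_mono_onI)
  fix a b assume ab: "a \<in> S" "b \<in> S" "a < b"
  show "f a < f b"
  proof (rule DERIV_pos_imp_increasing[OF ab(3)])
    fix x assume "a \<le> x" "x \<le> b"
    then have "x \<in> S"
      using mem_is_interval_1_I[OF assms(1) ab(1,2)] by blast
    then show "\<exists>y. (f has_real_derivative y) (at x) \<and> y > 0"
      using assms(2,3) by blast
  qed
qed

lemma open_image_pos_deriv:
  fixes f f' :: "real \<Rightarrow> real"
  assumes "open S" "is_interval S"
    and "\<And>x. x \<in> S \<Longrightarrow> (f has_real_derivative f' x) (at x)" "\<And>x. x \<in> S \<Longrightarrow> f' x > 0"
  shows "open (f ` S)"
proof (rule invariance_of_domain)
  show "continuous_on S f"
    using assms(3) DERIV_isCont by (blast intro: continuous_at_imp_continuous_on)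
  show "inj_on f S"
    using strict_mono_on_pos_deriv[OF assms(2-4)] by (rule strict_mono_on_imp_inj_on)
qed (fact assms(1))

lemma frenet_curveD:
  assumes "frenet_curve U c Tc Nc Bc k t" "u \<in> U"
  shows "norm (Tc u) = 1" "norm (Nc u) = 1" "Tc u \<bullet> Nc u = 0" "Bc u = cross3 (Tc u) (Nc u)"
    and "k u > 0"
    and "(Tc has_vector_derivative (k u *\<^sub>R Nc u)) (at u)"
    and "(Nc has_vector_derivative (- (k u *\<^sub>R Tc u) + t u *\<^sub>R Bc u)) (at u)"
    and "(Bc has_vector_derivative (- (t u *\<^sub>R Nc u))) (at u)"
  using assms unfolding frenet_curve_def by blast+

lemma frenet_curve_orthonormal:
  assumes "frenet_curve U c Tc Nc Bc k t" "u \<in> U"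
  shows "Tc u \<bullet> Tc u = 1" "Nc u \<bullet> Nc u = 1" "Bc u \<bullet> Bc u = 1"
    and "Tc u \<bullet> Nc u = 0" "Tc u \<bullet> Bc u = 0" "Nc u \<bullet> Bc u = 0"
    and "Nc u \<bullet> Tc u = 0" "Bc u \<bullet> Tc u = 0" "Bc u \<bullet> Nc u = 0"
proof -
  note T = frenet_curveD(1)[OF assms] and N = frenet_curveD(2)[OF assms]
    and TN = frenet_curveD(3)[OF assms] and B = frenet_curveD(4)[OF assms]
  show "Tc u \<bullet> Tc u = 1" "Nc u \<bullet> Nc u = 1"
    using T N by (simp_all add: norm_eq_1)
  show "Tc u \<bullet> Nc u = 0" "Nc u \<bullet> Tc u = 0"
    using TN by (simp_all add: inner_commute)
  show "Tc u \<bullet> Bc u = 0" "Nc u \<bullet> Bc u = 0" "Bc u \<bullet> Tc u = 0" "Bc u \<bullet> Nc u = 0"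
    unfolding B by (simp_all add: dot_cross_self inner_commute)
  have "(norm (Bc u))\<^sup>2 = 1"
    using norm_cross_dot[of "Tc u" "Nc u"] T N TN B by simp
  then show "Bc u \<bullet> Bc u = 1"
    by (simp add: power2_norm_eq_inner)
qed

lemma frenet_curve_cross3_binormal:
  assumes "frenet_curve U c Tc Nc Bc k t" "u \<in> U"
  shows "cross3 (Tc u) (Bc u) = - Nc u" "cross3 (Nc u) (Bc u) = Tc u"
  unfolding frenet_curveD(4)[OF assms] cross3_cross3_right
  using frenet_curve_orthonormal[OF assms] by simp_all

lemma sqrt_one_plus_ratio_sq_mult:
  fixes k t :: real
  assumes "k > 0"
  shows "sqrt (1 + (t / k)\<^sup>2) * k = sqrt (k\<^sup>2 + t\<^sup>2)"
proof -
  have "sqrt (1 + (t / k)\<^sup>2) * k = sqrt ((1 + (t / k)\<^sup>2) * k\<^sup>2)"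
    using assms by (simp add: real_sqrt_mult)
  also have "(1 + (t / k)\<^sup>2) * k\<^sup>2 = k\<^sup>2 + t\<^sup>2"
    using assms by (simp add: field_simps power2_eq_square)
  finally show ?thesis .
qed

locale mannheim_direction =
  fixes U :: "real set"
    and alphaT TT NT BT :: "real \<Rightarrow> real^3" and kT tT :: "real \<Rightarrow> real"
    and x y z :: "real \<Rightarrow> real"
    and beta Tb Nb Bb :: "real \<Rightarrow> real^3" and kb tb :: "real \<Rightarrow> real"
  assumes open_U: "open U"
    and alphaT_frenet: "frenet_curve U alphaT TT NT BT kT tT"
    and beta_frenet: "frenet_curve U beta Tb Nb Bb kb tb"
    and tangent_eq: "\<And>u. u \<in> U \<Longrightarrow> Tb u = x u *\<^sub>R TT u + y u *\<^sub>R NT u + z u *\<^sub>R BT u"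
    and xyz_unit: "\<And>u. u \<in> U \<Longrightarrow> (x u)\<^sup>2 + (y u)\<^sup>2 + (z u)\<^sup>2 = 1"
    and normal_eq_binormal: "\<And>u. u \<in> U \<Longrightarrow> Nb u = BT u"
begin

lemma tangent_components:
  assumes u: "u \<in> U"
  shows "Tb u \<bullet> TT u = x u" "Tb u \<bullet> NT u = y u" "Tb u \<bullet> BT u = z u"
  unfolding tangent_eq[OF u] using frenet_curve_orthonormal[OF alphaT_frenet u]
  by (simp_all add: inner_add_left)

lemma binormal_component_eq_0:
  assumes u: "u \<in> U"
  shows "z u = 0"
  using frenet_curve_orthonormal(4)[OF beta_frenet u] normal_eq_binormal[OF u]
    tangent_components(3)[OF u] by simp

lemma tangent_components_sum_sq:
  assumes u: "u \<in> U"
  shows "(x u)\<^sup>2 + (y u)\<^sup>2 = 1"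
  using xyz_unit[OF u] binormal_component_eq_0[OF u] by simp

lemma beta_binormal_eq:
  assumes u: "u \<in> U"
  shows "Bb u = y u *\<^sub>R TT u - x u *\<^sub>R NT u"
  unfolding frenet_curveD(4)[OF beta_frenet u] normal_eq_binormal[OF u] tangent_eq[OF u]
  using binormal_component_eq_0[OF u] frenet_curve_cross3_binormal[OF alphaT_frenet u]
  by (simp add: cross_add_left cross_mult_left)

lemma beta_tangent_deriv:
  assumes u: "u \<in> U"
  shows "(Tb has_vector_derivative (kb u *\<^sub>R BT u)) (at u)"
  using frenet_curveD(6)[OF beta_frenet u] normal_eq_binormal[OF u] by simp

lemma normal_deriv_eq_binormal_deriv:
  assumes u: "u \<in> U"
  shows "- (kb u *\<^sub>R Tb u) + tb u *\<^sub>R Bb u = - (tT u *\<^sub>R NT u)"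
proof -
  have "(BT has_vector_derivative (- (kb u *\<^sub>R Tb u) + tb u *\<^sub>R Bb u)) (at u)"
    by (rule has_vector_derivative_transform_within_open[OF frenet_curveD(7)[OF beta_frenet u] open_U u])
      (simp add: normal_eq_binormal)
  then show ?thesis
    using frenet_curveD(8)[OF alphaT_frenet u] vector_derivative_unique_at by blast
qed

text \<open>The tangent of \<open>beta\<close> stays orthogonal to \<open>BT\<close>, so the derivative of \<open>Tb \<bullet> BT\<close>
  vanishes; the Frenet equations evaluate that derivative to \<open>kb - tT y\<close>.\<close>

lemma curvature_eq:
  assumes u: "u \<in> U"
  shows "kb u = tT u * y u"
proof -
  have "((\<lambda>v. Tb v \<bullet> BT v) has_real_derivative
         (kb u *\<^sub>R BT u) \<bullet> BT u + Tb u \<bullet> (- (tT u *\<^sub>R NT u))) (at u)"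
    by (rule has_real_derivative_inner[OF beta_tangent_deriv[OF u] frenet_curveD(8)[OF alphaT_frenet u]])
  moreover have "((\<lambda>v. Tb v \<bullet> BT v) has_real_derivative 0) (at u)"
    by (rule has_field_derivative_transform_within_open[OF DERIV_const[of 0] open_U u])
      (simp add: tangent_components binormal_component_eq_0)
  ultimately have "(kb u *\<^sub>R BT u) \<bullet> BT u + Tb u \<bullet> (- (tT u *\<^sub>R NT u)) = 0"
    using DERIV_unique by blast
  then show ?thesis
    using frenet_curve_orthonormal[OF alphaT_frenet u] tangent_components[OF u] by simp
qed

lemma y_nonzero:
  assumes u: "u \<in> U"
  shows "y u \<noteq> 0"
  using frenet_curveD(5)[OF beta_frenet u] curvature_eq[OF u] by auto

lemma torsion_curvature_ratio_eq:
  assumes u: "u \<in> U"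
  shows "tb u / kb u = x u / y u"
proof -
  have "(- (kb u *\<^sub>R Tb u) + tb u *\<^sub>R Bb u) \<bullet> TT u = (- (tT u *\<^sub>R NT u)) \<bullet> TT u"
    using normal_deriv_eq_binormal_deriv[OF u] by simp
  then have "tb u * y u = kb u * x u"
    using beta_binormal_eq[OF u] frenet_curve_orthonormal[OF alphaT_frenet u] tangent_components[OF u]
    by (simp add: inner_diff_left)
  then show ?thesis
    using y_nonzero[OF u] frenet_curveD(5)[OF beta_frenet u] by (simp add: field_simps)
qed

lemma has_real_derivative_tangent_components:
  assumes u: "u \<in> U"
  shows "((\<lambda>v. Tb v \<bullet> TT v) has_real_derivative kT u * y u) (at u)"
    and "((\<lambda>v. Tb v \<bullet> NT v) has_real_derivative - kT u * x u) (at u)"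
  using has_real_derivative_inner[OF beta_tangent_deriv[OF u] frenet_curveD(6)[OF alphaT_frenet u]]
    has_real_derivative_inner[OF beta_tangent_deriv[OF u] frenet_curveD(7)[OF alphaT_frenet u]]
    frenet_curve_orthonormal[OF alphaT_frenet u] tangent_components[OF u] binormal_component_eq_0[OF u]
  by (simp_all add: inner_add_right inner_diff_right)

text \<open>On \<open>U\<close> the ratio \<open>tb / kb\<close> coincides with \<open>(Tb \<bullet> TT) / (Tb \<bullet> NT)\<close>, which can be
  differentiated by the quotient rule.\<close>

lemma has_real_derivative_torsion_curvature_ratio:
  assumes u: "u \<in> U"
  shows "((\<lambda>v. tb v / kb v) has_real_derivative kT u / (y u)\<^sup>2) (at u)"
proof -
  have "((\<lambda>v. (Tb v \<bullet> TT v) / (Tb v \<bullet> NT v)) has_real_derivative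
         (kT u * y u * y u - x u * (- kT u * x u)) / (y u * y u)) (at u)"
    using DERIV_divide[OF has_real_derivative_tangent_components[OF u]] y_nonzero[OF u]
    by (simp add: tangent_components[OF u])
  moreover have "kT u * y u * y u - x u * (- kT u * x u) = kT u * ((x u)\<^sup>2 + (y u)\<^sup>2)"
    by (simp add: algebra_simps power2_eq_square)
  then have "(kT u * y u * y u - x u * (- kT u * x u)) / (y u * y u) = kT u / (y u)\<^sup>2"
    using tangent_components_sum_sq[OF u] by (simp add: power2_eq_square)
  ultimately have "((\<lambda>v. (Tb v \<bullet> TT v) / (Tb v \<bullet> NT v)) has_real_derivative kT u / (y u)\<^sup>2) (at u)"
    by simp
  then show ?thesis
    by (rule has_field_derivative_transform_within_open[OF _ open_U u])
      (simp add: tangent_components torsion_curvature_ratio_eq)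
qed

lemma has_real_derivative_arctan_torsion_curvature_ratio:
  assumes u: "u \<in> U"
  shows "((\<lambda>v. arctan (tb v / kb v)) has_real_derivative kT u) (at u)"
proof -
  have "1 + (tb u / kb u)\<^sup>2 = 1 / (y u)\<^sup>2"
    unfolding torsion_curvature_ratio_eq[OF u]
    using tangent_components_sum_sq[OF u] y_nonzero[OF u] by (simp add: field_simps power2_eq_square)
  then show ?thesis
    using DERIV_chain2[OF DERIV_arctan has_real_derivative_torsion_curvature_ratio[OF u]]
      y_nonzero[OF u] by simp
qed

lemma harmonic_curvature_eq:
  assumes u: "u \<in> U"
  shows "(kb u)\<^sup>2 / ((kb u)\<^sup>2 + (tb u)\<^sup>2) powr (3/2) * deriv (\<lambda>v. tb v / kb v) u
           = sgn (y u) * kT u / tT u"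
proof -
  have kb: "kb u > 0" and yne: "y u \<noteq> 0"
    using frenet_curveD(5)[OF beta_frenet u] y_nonzero[OF u] .
  have "(kb u)\<^sup>2 + (tb u)\<^sup>2 = (kb u)\<^sup>2 * (1 + (tb u / kb u)\<^sup>2)"
    using kb by (simp add: field_simps)
  also have "1 + (tb u / kb u)\<^sup>2 = 1 / (y u)\<^sup>2"
    unfolding torsion_curvature_ratio_eq[OF u]
    using tangent_components_sum_sq[OF u] yne by (simp add: field_simps power2_eq_square)
  finally have "(kb u)\<^sup>2 + (tb u)\<^sup>2 = (kb u / \<bar>y u\<bar>)\<^sup>2"
    by (simp add: power_divide)
  moreover have "kb u / \<bar>y u\<bar> > 0"
    using kb yne by simp
  ultimately have norm3: "((kb u)\<^sup>2 + (tb u)\<^sup>2) powr (3/2) = (kb u / \<bar>y u\<bar>) ^ 3"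
    by (simp add: powr_powr powr_realpow[symmetric])
  have deriv_eq: "deriv (\<lambda>v. tb v / kb v) u = kT u / \<bar>y u\<bar>\<^sup>2"
    using DERIV_imp_deriv[OF has_real_derivative_torsion_curvature_ratio[OF u]] by simp
  have "(kb u)\<^sup>2 / ((kb u)\<^sup>2 + (tb u)\<^sup>2) powr (3/2) * deriv (\<lambda>v. tb v / kb v) u
          = \<bar>y u\<bar> * kT u / kb u"
    unfolding norm3 deriv_eq using kb yne by (simp add: field_simps power2_eq_square power3_eq_cube)
  also have "\<dots> = sgn (y u) * kT u / tT u"
    unfolding curvature_eq[OF u] using yne by (simp add: abs_sgn mult.assoc)
  finally show ?thesis .
qed

end

theorem corollary6p6:
  fixes I :: "real set"
    and alpha T N B :: "real \<Rightarrow> real^3" and kap tau :: "real \<Rightarrow> real"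
    and sT :: "real \<Rightarrow> real"
    and alphaT TT NT BT :: "real \<Rightarrow> real^3" and kT tT :: "real \<Rightarrow> real"
    and x y z :: "real \<Rightarrow> real"
    and beta Nb Bb :: "real \<Rightarrow> real^3" and kb tb :: "real \<Rightarrow> real"
  assumes I: "open I" "is_interval I" "I \<noteq> {}"
    and alpha_frenet: "frenet_curve I alpha T N B kap tau"
    and kap_diff: "\<And>s. s \<in> I \<Longrightarrow> kap differentiable (at s)"
    and tau_diff: "\<And>s. s \<in> I \<Longrightarrow> tau differentiable (at s)"
    and sT_deriv: "\<And>s. s \<in> I \<Longrightarrow> (sT has_real_derivative kap s) (at s)"
    and alphaT_def: "\<And>s. s \<in> I \<Longrightarrow> alphaT (sT s) = T s"
    and alphaT_frenet: "frenet_curve (sT ` I) alphaT TT NT BT kT tT"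
    and kT_eq: "\<And>s. s \<in> I \<Longrightarrow> kT (sT s) = sqrt (1 + (ratio_fn kap tau s)\<^sup>2)"
    and tT_eq: "\<And>s. s \<in> I \<Longrightarrow>
                 tT (sT s) = frenet_sigma kap tau s * sqrt (1 + (ratio_fn kap tau s)\<^sup>2)"
    and xyz_unit: "\<And>u. u \<in> sT ` I \<Longrightarrow> (x u)\<^sup>2 + (y u)\<^sup>2 + (z u)\<^sup>2 = 1"
    and beta_frenet: "frenet_curve (sT ` I) beta
                        (\<lambda>u. x u *\<^sub>R TT u + y u *\<^sub>R NT u + z u *\<^sub>R BT u) Nb Bb kb tb"
    and mannheim: "\<And>u. u \<in> sT ` I \<Longrightarrow> Nb u = BT u"
  shows "\<exists>psi :: real \<Rightarrow> real.
           (\<forall>s\<in>I. (psi has_real_derivative sqrt ((kap s)\<^sup>2 + (tau s)\<^sup>2)) (at s)) \<and>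
           (\<forall>s\<in>I. tb (sT s) / kb (sT s) = tan (psi s)) \<and>
           (\<forall>s\<in>I.
              let lhs = (kb (sT s))\<^sup>2 / ((kb (sT s))\<^sup>2 + (tb (sT s))\<^sup>2) powr (3/2)
                        * deriv (\<lambda>u. tb u / kb u) (sT s)
              in lhs = 1 / frenet_sigma kap tau s \<or> lhs = - (1 / frenet_sigma kap tau s))"
proof -
  have kap_pos: "\<And>s. s \<in> I \<Longrightarrow> kap s > 0"
    using frenet_curveD(5)[OF alpha_frenet] .
  have "open (sT ` I)"
    using open_image_pos_deriv[OF I(1,2) sT_deriv kap_pos] .
  then interpret mannheim_direction "sT ` I" alphaT TT NT BT kT tT x y z
      beta "\<lambda>u. x u *\<^sub>R TT u + y u *\<^sub>R NT u + z u *\<^sub>R BT u" Nb Bb kb tb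
    by unfold_locales (simp_all add: alphaT_frenet beta_frenet xyz_unit mannheim)
  define psi where "psi = (\<lambda>s. arctan (tb (sT s) / kb (sT s)))"
  show ?thesis
  proof (intro exI[of _ psi] conjI ballI)
    fix s assume s: "s \<in> I"
    have "(psi has_real_derivative kT (sT s) * kap s) (at s)"
      unfolding psi_def
      using DERIV_chain2[OF has_real_derivative_arctan_torsion_curvature_ratio sT_deriv[OF s]] s
      by simp
    then show "(psi has_real_derivative sqrt ((kap s)\<^sup>2 + (tau s)\<^sup>2)) (at s)"
      using kT_eq[OF s] sqrt_one_plus_ratio_sq_mult[OF kap_pos[OF s]] by (simp add: ratio_fn_def)
  next
    fix s show "tb (sT s) / kb (sT s) = tan (psi s)"
      unfolding psi_def by (simp add: tan_arctan)
  next
    fix s assume s: "s \<in> I"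
    then have u: "sT s \<in> sT ` I" by blast
    have "kT (sT s) / tT (sT s) = 1 / frenet_sigma kap tau s"
      using tT_eq[OF s] kT_eq[OF s] frenet_curveD(5)[OF alphaT_frenet u] by simp
    moreover have "sgn (y (sT s)) = 1 \<or> sgn (y (sT s)) = - 1"
      using y_nonzero[OF u] by (simp add: sgn_real_def)
    ultimately show "let lhs = (kb (sT s))\<^sup>2 / ((kb (sT s))\<^sup>2 + (tb (sT s))\<^sup>2) powr (3/2)
                        * deriv (\<lambda>u. tb u / kb u) (sT s)
              in lhs = 1 / frenet_sigma kap tau s \<or> lhs = - (1 / frenet_sigma kap tau s)"
      unfolding Let_def harmonic_curvature_eq[OF u] by auto
  qed
qed

end
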